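(* Let $n\ge3$, $m=n-1$, and consider $$(P):\ \sup\ x_{n-1}\ \text{ s.t. }\ x_1E_1+\sum_{i=2}^{n-1}x_i(E_i+E_{i-1,n})\preceq I_{n-1}\oplus 0_1,$$ with dual $(D)$. Then $\operatorname{val}(P)=0$ and $\operatorname{val}(D)=1$.
   Context: $E_{ij}\in\mathcal S^n$ is the symmetric matrix whose only nonzero entries are $1$ in positions $(i,j)$ and $(j,i)$; $E_i:=E_{ii}$. For $(P)$: $\sup\{c^Tx:\sum_ix_iA_i\preceq B\}$ the dual is $(D)$: $\inf\{B\bullet Y:A_i\bullet Y=c_i\ \forall i,\ Y\succeq0\}$, $S\bullet T=\operatorname{trace}(ST)$. *)

theory Defs
  imports Complex_Main "HOL-Library.Extended_Real"
begin

text \<open>Real n x n matrices are represented as functions nat => nat => real, of which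
only the entries with indices in {1..n} matter (1-based, as in the paper).\<close>

type_synonym rmat = "nat \<Rightarrow> nat \<Rightarrow> real"

definition Emat :: "nat \<Rightarrow> nat \<Rightarrow> rmat" where
  "Emat i j = (\<lambda>a b. if (a = i \<and> b = j) \<or> (a = j \<and> b = i) then 1 else 0)"

definition symm :: "nat \<Rightarrow> rmat \<Rightarrow> bool" where
  "symm n M \<longleftrightarrow> (\<forall>a\<in>{1..n}. \<forall>b\<in>{1..n}. M a b = M b a)"

definition psd :: "nat \<Rightarrow> rmat \<Rightarrow> bool" where
  "psd n M \<longleftrightarrow> symm n M \<and>
     (\<forall>v :: nat \<Rightarrow> real. (\<Sum>a\<in>{1..n}. \<Sum>b\<in>{1..n}. v a * M a b * v b) \<ge> 0)"

definition loewner_le :: "nat \<Rightarrow> rmat \<Rightarrow> rmat \<Rightarrow> bool" where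
  "loewner_le n X Y \<longleftrightarrow> psd n (\<lambda>a b. Y a b - X a b)"

definition frob :: "nat \<Rightarrow> rmat \<Rightarrow> rmat \<Rightarrow> real" where
  "frob n S T = (\<Sum>a\<in>{1..n}. \<Sum>b\<in>{1..n}. S a b * T b a)"

definition valP :: "nat \<Rightarrow> nat \<Rightarrow> (nat \<Rightarrow> rmat) \<Rightarrow> rmat \<Rightarrow> (nat \<Rightarrow> real) \<Rightarrow> ereal" where
  "valP n m A B c =
     (SUP x \<in> {x :: nat \<Rightarrow> real. loewner_le n (\<lambda>a b. \<Sum>i\<in>{1..m}. x i * A i a b) B}.
        ereal (\<Sum>i\<in>{1..m}. c i * x i))"

definition valD :: "nat \<Rightarrow> nat \<Rightarrow> (nat \<Rightarrow> rmat) \<Rightarrow> rmat \<Rightarrow> (nat \<Rightarrow> real) \<Rightarrow> ereal" where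
  "valD n m A B c =
     (INF Y \<in> {Y. psd n Y \<and> (\<forall>i\<in>{1..m}. frob n (A i) Y = c i)}. ereal (frob n B Y))"

definition exA :: "nat \<Rightarrow> nat \<Rightarrow> rmat" where
  "exA n i = (if i = 1 then Emat 1 1
              else (\<lambda>a b. Emat i i a b + Emat (i - 1) n a b))"

definition exB :: "nat \<Rightarrow> rmat" where
  "exB n = (\<lambda>a b. if a = b \<and> a \<le> n - 1 then 1 else 0)"

definition exc :: "nat \<Rightarrow> nat \<Rightarrow> real" where
  "exc n i = (if i = n - 1 then 1 else 0)"

end

theory Submission
  imports Defs
begin

text \<open>
  Both values come from the fact that a zero diagonal entry of a PSD matrix kills its row.
  In (P) the slack matrix B - \<Sum> x_i A_i has (n, n)-entry 0 and (n, n-2)-entry -x_{n-1}, so every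
  feasible x has objective 0, and x = 0 is feasible. In (D) the constraints read Y_11 = 0,
  Y_ii + 2 Y_{i-1,n} = 0 for 2 \<le> i \<le> n-2 and Y_{n-1,n-1} + 2 Y_{n-2,n} = 1; inductively
  Y_ii = 0 forces Y_{i,n} = 0 and then Y_{i+1,i+1} = 0, up to i = n-2, so Y_{n-1,n-1} = 1 and
  B \<bullet> Y \<ge> 1, attained by Y = E_{n-1}.
\<close>

definition quad_form :: "nat \<Rightarrow> rmat \<Rightarrow> (nat \<Rightarrow> real) \<Rightarrow> real" where
  "quad_form n M v = (\<Sum>a\<in>{1..n}. \<Sum>b\<in>{1..n}. v a * M a b * v b)"

lemma psd_iff_quad_form: "psd n M \<longleftrightarrow> symm n M \<and> (\<forall>v. quad_form n M v \<ge> 0)"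
  unfolding psd_def quad_form_def ..

lemma sum_eq_single_point:
  fixes f :: "'a \<Rightarrow> 'b::comm_monoid_add"
  assumes "finite A" "a \<in> A" "\<And>b. b \<in> A \<Longrightarrow> b \<noteq> a \<Longrightarrow> f b = 0"
  shows "sum f A = f a"
  using sum.mono_neutral_right[of A "{a}" f] assms by auto

lemma quad_form_supported:
  assumes "T \<subseteq> {1..n}" "\<And>a. a \<notin> T \<Longrightarrow> v a = 0"
  shows "quad_form n M v = (\<Sum>a\<in>T. \<Sum>b\<in>T. v a * M a b * v b)"
proof -
  have "(\<Sum>b\<in>{1..n}. v a * M a b * v b) = (\<Sum>b\<in>T. v a * M a b * v b)" for a
    by (rule sum.mono_neutral_right) (use assms in auto)
  then have "quad_form n M v = (\<Sum>a\<in>{1..n}. \<Sum>b\<in>T. v a * M a b * v b)"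
    unfolding quad_form_def by simp
  also have "\<dots> = (\<Sum>a\<in>T. \<Sum>b\<in>T. v a * M a b * v b)"
    by (rule sum.mono_neutral_right) (use assms in auto)
  finally show ?thesis .
qed

lemma psd_diag_nonneg:
  assumes "psd n M" "a \<in> {1..n}"
  shows "M a a \<ge> 0"
proof -
  define v where "v = (\<lambda>x. if x = a then 1 else (0::real))"
  have "quad_form n M v = M a a"
    using quad_form_supported[of "{a}" n v M] assms(2) by (simp add: v_def)
  then show ?thesis using assms(1) psd_iff_quad_form by metis
qed

lemma affine_nonneg_imp_slope_zero:
  fixes c d :: real
  assumes "\<And>s. c + s * d \<ge> 0"
  shows "d = 0"
proof (rule ccontr)
  assume "d \<noteq> 0"
  then have "c + (- (c + 1) / d) * d = -1" by simp
  with assms[of "- (c + 1) / d"] show False by linarith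
qed

lemma psd_diag_zero_imp_row_zero:
  assumes psd: "psd n M" and a: "a \<in> {1..n}" and b: "b \<in> {1..n}" and zero: "M a a = 0"
  shows "M a b = 0"
proof (cases "a = b")
  case True
  with zero show ?thesis by simp
next
  case False
  have sym: "M b a = M a b" using psd a b unfolding psd_def symm_def by auto
  have "M b b + s * (2 * M a b) \<ge> 0" for s
  proof -
    define v where "v = (\<lambda>x. if x = a then s else if x = b then 1 else (0::real))"
    have "quad_form n M v = M b b + s * (2 * M a b)"
      using quad_form_supported[of "{a, b}" n v M] a b False zero sym
      by (simp add: v_def algebra_simps)
    then show ?thesis using psd psd_iff_quad_form by metis
  qed
  then show ?thesis using affine_nonneg_imp_slope_zero by fastforce
qed

lemma psd_diagonal:
  assumes "\<And>a b. a \<noteq> b \<Longrightarrow> M a b = 0" "\<And>a. a \<in> {1..n} \<Longrightarrow> M a a \<ge> 0"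
  shows "psd n M"
  unfolding psd_iff_quad_form
proof (intro conjI allI)
  show "symm n M" unfolding symm_def using assms(1) by metis
  fix v
  have "quad_form n M v = (\<Sum>a\<in>{1..n}. M a a * (v a)\<^sup>2)"
    unfolding quad_form_def
    by (intro sum.cong refl, subst sum_eq_single_point) (auto simp: assms(1) power2_eq_square)
  also have "\<dots> \<ge> 0" by (intro sum_nonneg) (simp add: assms(2))
  finally show "quad_form n M v \<ge> 0" .
qed

lemma frob_commute: "frob n S T = frob n T S"
  unfolding frob_def by (subst sum.swap) (simp add: mult.commute)

lemma frob_add_left: "frob n (\<lambda>a b. S a b + T a b) Y = frob n S Y + frob n T Y"
  unfolding frob_def by (simp add: distrib_right sum.distrib)

lemma frob_diagonal_left:
  assumes "\<And>a b. a \<noteq> b \<Longrightarrow> S a b = 0"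
  shows "frob n S T = (\<Sum>a\<in>{1..n}. S a a * T a a)"
  unfolding frob_def by (intro sum.cong refl, subst sum_eq_single_point) (auto simp: assms)

lemma frob_Emat_left:
  assumes "p \<in> {1..n}" "q \<in> {1..n}"
  shows "frob n (Emat p q) Y = (if p = q then Y p p else Y q p + Y p q)"
proof -
  have row: "(\<Sum>b\<in>{1..n}. Emat p q a b * Y b a)
      = (if a = p then Y q a else 0) + (if a = q \<and> p \<noteq> q then Y p a else 0)" for a
  proof -
    have "(\<Sum>b\<in>{1..n}. Emat p q a b * Y b a)
        = (\<Sum>b\<in>{1..n}. (if b = q then (if a = p then Y b a else 0) else 0)
                         + (if b = p then (if a = q \<and> p \<noteq> q then Y b a else 0) else 0))"
      by (rule sum.cong) (auto simp: Emat_def)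
    then show ?thesis using assms by (simp add: sum.distrib sum.delta')
  qed
  show ?thesis
    unfolding frob_def row using assms by (simp add: sum.distrib sum.delta')
qed

lemma exB_psd: "psd n (exB n)"
  by (rule psd_diagonal) (simp_all add: exB_def)

lemma exc_objective:
  assumes "n \<ge> 3"
  shows "(\<Sum>i\<in>{1..n-1}. exc n i * x i) = x (n - 1)"
  using assms by (subst sum_eq_single_point[of _ "n - 1"]) (auto simp: exc_def)

lemma exA_entry_corner:
  assumes "n \<ge> 3" "i \<in> {1..n-1}"
  shows "exA n i n n = 0"
  using assms unfolding exA_def Emat_def by auto

lemma exA_entry_last_row:
  assumes "n \<ge> 3" "i \<in> {1..n-1}"
  shows "exA n i n (n - 2) = (if i = n - 1 then 1 else 0)"
proof (cases "i = 1")
  case False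
  with assms have "(n = i - 1 \<and> n - 2 = n \<or> n - 2 = i - 1) \<longleftrightarrow> i = n - 1" "n - 2 \<noteq> n"
    by auto
  with False assms show ?thesis unfolding exA_def Emat_def by auto
qed (use assms in \<open>simp add: exA_def Emat_def\<close>)

lemma exA_entry_diag:
  assumes "n \<ge> 3" "i \<in> {1..n-1}"
  shows "exA n i (n - 1) (n - 1) = exc n i"
proof (cases "i = 1")
  case True
  with assms show ?thesis by (simp add: exA_def Emat_def exc_def)
next
  case False
  with assms have "n - 1 \<noteq> n" "(n - 1 = i) \<longleftrightarrow> (i = n - 1)" by auto
  with False show ?thesis by (simp add: exA_def Emat_def exc_def)
qed

lemma primal_feasible_imp_zero:
  assumes n: "n \<ge> 3"
    and feasible: "loewner_le n (\<lambda>a b. \<Sum>i\<in>{1..n-1}. x i * exA n i a b) (exB n)"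
  shows "x (n - 1) = 0"
proof -
  define M where "M = (\<lambda>a b. exB n a b - (\<Sum>i\<in>{1..n-1}. x i * exA n i a b))"
  have psd: "psd n M" using feasible unfolding loewner_le_def M_def .
  have "(\<Sum>i\<in>{1..n-1}. x i * exA n i n n) = 0"
    by (rule sum.neutral) (simp add: exA_entry_corner[OF n])
  then have "M n n = 0" using n by (simp add: M_def exB_def)
  then have "M n (n - 2) = 0" by (rule psd_diag_zero_imp_row_zero[OF psd, rotated 2]) (use n in auto)
  moreover have "M n (n - 2) = - x (n - 1)"
  proof -
    have "(\<Sum>i\<in>{1..n-1}. x i * exA n i n (n - 2)) = x (n - 1)"
      using n by (subst sum_eq_single_point[of _ "n - 1"]) (auto simp: exA_entry_last_row[OF n])
    then show ?thesis using n by (simp add: M_def exB_def)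
  qed
  ultimately show ?thesis by simp
qed

lemma primal_value:
  assumes n: "n \<ge> 3"
  shows "valP n (n - 1) (exA n) (exB n) (exc n) = 0"
proof -
  define feasible where
    "feasible = {x. loewner_le n (\<lambda>a b. \<Sum>i\<in>{1..n-1}. x i * exA n i a b) (exB n)}"
  have "(\<lambda>_. 0) \<in> feasible"
    using exB_psd[of n] by (simp add: feasible_def loewner_le_def)
  moreover have "ereal (x (n - 1)) = 0" if "x \<in> feasible" for x
    using primal_feasible_imp_zero[OF n] that by (simp add: feasible_def)
  ultimately have "(SUP x\<in>feasible. ereal (x (n - 1))) = 0"
    by (intro SUP_eq_const) auto
  then show ?thesis
    unfolding valP_def exc_objective[OF n] feasible_def .
qed

lemma frob_exA_first: "n \<ge> 3 \<Longrightarrow> frob n (exA n 1) Y = Y 1 1"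
  unfolding exA_def by (simp add: frob_Emat_left)

lemma frob_exA:
  assumes n: "n \<ge> 3" and i: "i \<in> {2..n-1}" and sym: "symm n Y"
  shows "frob n (exA n i) Y = Y i i + 2 * Y (i - 1) n"
proof -
  have idx: "i - 1 \<in> {1..n}" "i \<in> {1..n}" "n \<in> {1..n}" "i - 1 \<noteq> n" using i n by auto
  have "exA n i = (\<lambda>a b. Emat i i a b + Emat (i - 1) n a b)" using i by (simp add: exA_def)
  then have "frob n (exA n i) Y = Y i i + (Y n (i - 1) + Y (i - 1) n)"
    using idx by (simp add: frob_add_left frob_Emat_left)
  moreover have "Y n (i - 1) = Y (i - 1) n" using sym idx unfolding symm_def by blast
  ultimately show ?thesis by simp
qed

locale dual_feasible =
  fixes n :: nat and Y :: rmat
  assumes n: "n \<ge> 3"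
    and psd: "psd n Y"
    and constraint: "\<And>i. i \<in> {1..n-1} \<Longrightarrow> frob n (exA n i) Y = exc n i"
begin

lemma symm: "symm n Y"
  using psd unfolding psd_def by simp

lemma leading_diag_zero:
  assumes "1 \<le> k" "k \<le> n - 2"
  shows "Y k k = 0"
  using assms
proof (induction k rule: nat_induct_at_least)
  case base
  then show ?case using constraint[of 1] frob_exA_first[OF n] n by (simp add: exc_def)
next
  case (Suc k)
  have "Y k k = 0" by (rule Suc.IH) (use Suc.prems in simp)
  then have "Y k n = 0" by (rule psd_diag_zero_imp_row_zero[OF psd, rotated 2]) (use Suc n in auto)
  moreover have "frob n (exA n (Suc k)) Y = 0" using constraint[of "Suc k"] Suc by (simp add: exc_def)
  ultimately show ?case using frob_exA[OF n _ symm, of "Suc k"] Suc by simp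
qed

lemma last_diag_one: "Y (n - 1) (n - 1) = 1"
proof -
  have "Y (n - 2) (n - 2) = 0" using leading_diag_zero n by simp
  then have "Y (n - 2) n = 0" by (rule psd_diag_zero_imp_row_zero[OF psd, rotated 2]) (use n in auto)
  moreover have "frob n (exA n (n - 1)) Y = 1" using constraint[of "n - 1"] n by (simp add: exc_def)
  moreover have "n - 1 - 1 = n - 2" by simp
  ultimately show ?thesis using frob_exA[OF n _ symm, of "n - 1"] n by simp
qed

lemma objective_ge_one: "frob n (exB n) Y \<ge> 1"
proof -
  have "frob n (exB n) Y = (\<Sum>a\<in>{1..n}. exB n a a * Y a a)"
    by (rule frob_diagonal_left) (simp add: exB_def)
  also have "\<dots> \<ge> exB n (n - 1) (n - 1) * Y (n - 1) (n - 1)"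
    by (rule member_le_sum) (use n psd_diag_nonneg[OF psd] in \<open>auto simp: exB_def\<close>)
  finally show ?thesis using last_diag_one n by (simp add: exB_def)
qed

end

lemma dual_optimal_point:
  assumes n: "n \<ge> 3"
  defines "Y \<equiv> \<lambda>a b. if a = n - 1 \<and> b = n - 1 then 1 else (0::real)"
  shows "dual_feasible n Y" and "frob n (exB n) Y = 1"
proof -
  have diag: "\<And>a b. a \<noteq> b \<Longrightarrow> Y a b = 0" by (simp add: Y_def)
  have frob_Y: "frob n S Y = S (n - 1) (n - 1)" for S
  proof -
    have "frob n S Y = frob n Y S" by (rule frob_commute)
    also have "\<dots> = (\<Sum>a\<in>{1..n}. Y a a * S a a)" by (rule frob_diagonal_left[OF diag])
    also have "\<dots> = S (n - 1) (n - 1)"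
      using n by (subst sum_eq_single_point[of _ "n - 1"]) (auto simp: Y_def)
    finally show ?thesis .
  qed
  show "dual_feasible n Y"
  proof
    show "psd n Y" by (rule psd_diagonal) (simp_all add: Y_def)
    show "frob n (exA n i) Y = exc n i" if "i \<in> {1..n-1}" for i
      unfolding frob_Y using n that by (rule exA_entry_diag)
  qed (rule n)
  show "frob n (exB n) Y = 1" using n by (simp add: frob_Y exB_def)
qed

lemma dual_value:
  assumes n: "n \<ge> 3"
  shows "valD n (n - 1) (exA n) (exB n) (exc n) = 1"
proof -
  have feasible_iff: "psd n Y \<and> (\<forall>i\<in>{1..n-1}. frob n (exA n i) Y = exc n i) \<longleftrightarrow> dual_feasible n Y" for Y
    using n unfolding dual_feasible_def by blast
  obtain Y where "dual_feasible n Y" "frob n (exB n) Y = 1"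
    using dual_optimal_point[OF n] by blast
  then show ?thesis
    unfolding valD_def feasible_iff
    by (intro antisym INF_lower2 INF_greatest)
       (auto simp: one_ereal_def dual_feasible.objective_ge_one)
qed

theorem mainTheorem6:
  fixes n :: nat
  assumes "n \<ge> 3"
  shows "valP n (n - 1) (exA n) (exB n) (exc n) = 0
       \<and> valD n (n - 1) (exA n) (exB n) (exc n) = 1"
  using primal_value[OF assms] dual_value[OF assms] by simp

end
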